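(* In the search model described in the context, let $\sigma^\ast=(L_1,L_2,\ldots)$ be an optimal search strategy. Then there do not exist intervals $L,L''\subseteq[0,1)$ with $\mu(L)>0$, $\mu(L'')>0$ and $\inf L>\sup L''$ such that $L$ is searched under $\sigma^\ast$ (i.e., $L\subseteq L_t$ for some $t$) and $L''$ is never searched (i.e., $L''\cap L_t=\emptyset$ for all $t$).
   Context: A single agent searches for an innovation among research projects $J=[0,1)$. In each period $t=1,2,\ldots$ the agent may examine an arbitrary Lebesgue-measurable set $S\subseteq J$ at cost $C(S)=\int_S c(j)\,dj$, where $c:[0,1)\to\mathbb{R}$ is continuous, strictly increasing, and satisfies $\lim_{j\to 1}c(j)=\infty$. With probability $p\in(0,1)$ the innovation is feasible, in which case there is a single successful project $\hat j\in J$, distributed uniformly on $J$; examining $\hat j$ yields a success of value $v>0$, examining any other project yields nothing. With probability $1-p$ no project is successful. Payoffs and costs are discounted by $\delta\in(0,1)$ per period. A search strategy is a sequence $\sigma=(L_1,L_2,\ldots)$ of (possibly empty) measurable subsets of $[0,1)$, where $L_t$ is the set examined in period $t$ if no success occurred in periods $1,\ldots,t-1$; search ends once a success occurs. Let $S_t=\bigcup_{t'<t}L_{t'}$. The agent's payoff from $\sigma$ is $\mathbb{E}\big[\sum_{t\ge1}\delta^{t-1}\big(v\cdot\mathbf{1}\{\text{success in period } t\}-C(L_t)\cdot\mathbf{1}\{\text{no success before period } t\}\big)\big]$, where success in period $t$ means $\hat j$ exists, $\hat j\in L_t$ and $\hat j\notin S_t$. A strategy is optimal if it maximizes this payoff;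 $\mu$ denotes Lebesgue measure. *)

theory Defs
  imports "HOL-Analysis.Analysis"
begin

text \<open>Cost of examining a measurable set S: the Lebesgue integral of c over S,
  as an extended real (positive part minus negative part; may be +infinity).\<close>
definition search_cost :: "(real \<Rightarrow> real) \<Rightarrow> real set \<Rightarrow> ereal" where
  "search_cost c S =
     enn2ereal (\<integral>\<^sup>+ x. indicator S x * ennreal (c x) \<partial>lebesgue)
   - enn2ereal (\<integral>\<^sup>+ x. indicator S x * ennreal (- c x) \<partial>lebesgue)"

text \<open>Admissible strategies: sequences of Lebesgue measurable subsets of [0,1).
  Index t :: nat = 0,1,2,... corresponds to period t+1 of the paper.\<close>
definition strategy :: "(nat \<Rightarrow> real set) \<Rightarrow> bool" where
  "strategy Ls \<longleftrightarrow> (\<forall>t. Ls t \<in> sets lebesgue \<and> Ls t \<subseteq> {0..<1})"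

definition searched_before :: "(nat \<Rightarrow> real set) \<Rightarrow> nat \<Rightarrow> real set" where
  "searched_before Ls t = (\<Union>t'<t. Ls t')"

text \<open>Expected discounted payoff contribution of (0-indexed) period t:
  success in period t has probability p * mu(L_t - S_t); no success before t
  has probability 1 - p * mu(S_t).\<close>
definition period_payoff ::
  "(real \<Rightarrow> real) \<Rightarrow> real \<Rightarrow> real \<Rightarrow> real \<Rightarrow> (nat \<Rightarrow> real set) \<Rightarrow> nat \<Rightarrow> ereal" where
  "period_payoff c p v \<delta> Ls t =
     ereal (\<delta> ^ t * v * p * measure lebesgue (Ls t - searched_before Ls t))
   - ereal (\<delta> ^ t * (1 - p * measure lebesgue (searched_before Ls t))) * search_cost c (Ls t)"

text \<open>Total expected payoff: sum of positive parts minus sum of negative parts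
  (the positive parts are summable, so this is the value of the series in the
  extended reals).\<close>
definition payoff ::
  "(real \<Rightarrow> real) \<Rightarrow> real \<Rightarrow> real \<Rightarrow> real \<Rightarrow> (nat \<Rightarrow> real set) \<Rightarrow> ereal" where
  "payoff c p v \<delta> Ls =
     (\<Sum>t. max 0 (period_payoff c p v \<delta> Ls t)) - (\<Sum>t. max 0 (- period_payoff c p v \<delta> Ls t))"

definition optimal_strategy ::
  "(real \<Rightarrow> real) \<Rightarrow> real \<Rightarrow> real \<Rightarrow> real \<Rightarrow> (nat \<Rightarrow> real set) \<Rightarrow> bool" where
  "optimal_strategy c p v \<delta> Ls \<longleftrightarrow>
     strategy Ls \<and> (\<forall>Ls'. strategy Ls' \<longrightarrow> payoff c p v \<delta> Ls' \<le> payoff c p v \<delta> Ls)"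

end

theory Submission
  imports Defs
begin

text \<open>
  Suppose an optimal strategy examines, in period t, a block [a, a+m] of the searched interval,
  while the block [b, b+m] of the lower, never searched interval is left alone. Translating, in
  every period, the examined projects of [a, a+m] down to [b, b+m] keeps every success
  probability (translations preserve Lebesgue measure and [b, b+m] was never examined before),
  but since c is increasing it saves at least (c a - c (b+m)) times the moved measure in every
  period, strictly so in period t. The resulting strategy is strictly better, a contradiction.
  The comparison of the two payoff series is legitimate because their positive parts are finite
  (rewards are discounted and costs are bounded below) and so is the negative part for an
  optimal strategy, which does at least as well as never searching.
\<close>

section \<open>Search costs\<close>

lemma continuous_on_set_borel_measurable_lebesgue:
  fixes c :: "real \<Rightarrow> real"
  assumes "continuous_on U c" "S \<in> sets lebesgue" "S \<subseteq> U"
  shows "set_borel_measurable lebesgue S c"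
proof -
  have "c \<in> borel_measurable (lebesgue_on S)"
    using continuous_on_subset[OF assms(1,3)] assms(2) by (rule continuous_imp_measurable_on_sets_lebesgue)
  then have "(\<lambda>x. if x \<in> S then c x else 0) \<in> borel_measurable lebesgue"
    using assms(2) by (rule borel_measurable_if_I)
  moreover have "(\<lambda>x. indicator S x *\<^sub>R c x) = (\<lambda>x. if x \<in> S then c x else 0)"
    by (auto simp: indicator_def)
  ultimately show ?thesis
    unfolding set_borel_measurable_def by simp
qed

lemma set_borel_measurable_ennreal_parts:
  fixes c :: "real \<Rightarrow> real"
  assumes "set_borel_measurable lebesgue S c"
  shows "(\<lambda>x. indicator S x * ennreal (c x)) \<in> borel_measurable lebesgue"
    and "(\<lambda>x. indicator S x * ennreal (- c x)) \<in> borel_measurable lebesgue"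
proof -
  have [measurable]: "(\<lambda>x. indicator S x * c x) \<in> borel_measurable lebesgue"
    using assms by (simp add: set_borel_measurable_def)
  have eq: "indicator S x * ennreal (c x) = ennreal (indicator S x * c x)"
    "indicator S x * ennreal (- c x) = ennreal (- (indicator S x * c x))" for x
    by (simp_all split: split_indicator)
  show "(\<lambda>x. indicator S x * ennreal (c x)) \<in> borel_measurable lebesgue"
    unfolding eq(1) by measurable
  show "(\<lambda>x. indicator S x * ennreal (- c x)) \<in> borel_measurable lebesgue"
    unfolding eq(2) by measurable
qed

lemma nn_integral_indicator_disjoint_Un:
  assumes "(\<lambda>x. indicator A x * f x) \<in> borel_measurable M"
    and "(\<lambda>x. indicator B x * f x) \<in> borel_measurable M" and "A \<inter> B = {}"
  shows "(\<integral>\<^sup>+ x. indicator (A \<union> B) x * f x \<partial>M)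
           = (\<integral>\<^sup>+ x. indicator A x * f x \<partial>M) + (\<integral>\<^sup>+ x. indicator B x * f x \<partial>M)"
proof -
  have "indicator (A \<union> B) x * f x = indicator A x * f x + indicator B x * f x" for x
    using assms(3) by (auto split: split_indicator)
  then show ?thesis
    using assms(1,2) by (simp add: nn_integral_add)
qed

lemma nn_integral_indicator_neg_le:
  fixes c :: "real \<Rightarrow> real"
  assumes "S \<in> lmeasurable" "\<And>x. x \<in> S \<Longrightarrow> k \<le> c x"
  shows "enn2ereal (\<integral>\<^sup>+ x. indicator S x * ennreal (- c x) \<partial>lebesgue)
           \<le> ereal (max 0 (- k) * measure lebesgue S)"
proof -
  have "(\<integral>\<^sup>+ x. indicator S x * ennreal (- c x) \<partial>lebesgue)
          \<le> (\<integral>\<^sup>+ x. ennreal (max 0 (- k)) * indicator S x \<partial>lebesgue)"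
    using assms(2) by (intro nn_integral_mono) (auto intro!: ennreal_leI max.coboundedI2 split: split_indicator)
  also have "\<dots> = ennreal (max 0 (- k) * measure lebesgue S)"
    using assms(1) by (simp add: nn_integral_cmult_indicator emeasure_eq_measure2 ennreal_mult)
  finally show ?thesis
    by (simp add: less_eq_ennreal.rep_eq)
qed

lemma search_cost_lower_bound:
  fixes c :: "real \<Rightarrow> real"
  assumes "S \<in> lmeasurable" "\<And>x. x \<in> S \<Longrightarrow> k \<le> c x"
  shows "ereal (min 0 k * measure lebesgue S) \<le> search_cost c S"
proof -
  have "ereal (min 0 k * measure lebesgue S) = 0 - ereal (max 0 (- k) * measure lebesgue S)"
    by (cases "0 \<le> k") auto
  also have "\<dots> \<le> search_cost c S"
    unfolding search_cost_def
    using nn_integral_indicator_neg_le[OF assms] by (intro ereal_minus_mono) simp_all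
  finally show ?thesis .
qed

lemma search_cost_Un:
  fixes c :: "real \<Rightarrow> real"
  assumes "A \<in> lmeasurable" "set_borel_measurable lebesgue A c"
    and "B \<in> lmeasurable" "set_borel_measurable lebesgue B c"
    and "A \<inter> B = {}" "\<And>x. x \<in> A \<union> B \<Longrightarrow> k \<le> c x"
  shows "search_cost c (A \<union> B) = search_cost c A + search_cost c B"
proof -
  define P where "P S = enn2ereal (\<integral>\<^sup>+ x. indicator S x * ennreal (c x) \<partial>lebesgue)" for S
  define N where "N S = enn2ereal (\<integral>\<^sup>+ x. indicator S x * ennreal (- c x) \<partial>lebesgue)" for S
  have P_Un: "P (A \<union> B) = P A + P B"
    unfolding P_def plus_ennreal.rep_eq[symmetric]
    by (rule arg_cong[where f = enn2ereal], rule nn_integral_indicator_disjoint_Un)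
      (use set_borel_measurable_ennreal_parts(1) assms(2,4,5) in auto)
  have N_Un: "N (A \<union> B) = N A + N B"
    unfolding N_def plus_ennreal.rep_eq[symmetric]
    by (rule arg_cong[where f = enn2ereal], rule nn_integral_indicator_disjoint_Un)
      (use set_borel_measurable_ennreal_parts(2) assms(2,4,5) in auto)
  have N_real: "\<exists>r. N S = ereal r" if "S \<in> lmeasurable" "S \<subseteq> A \<union> B" for S
  proof -
    have "\<And>x. x \<in> S \<Longrightarrow> k \<le> c x"
      using that(2) assms(6) by blast
    then have "N S \<le> ereal (max 0 (- k) * measure lebesgue S)"
      unfolding N_def by (rule nn_integral_indicator_neg_le[OF that(1)])
    moreover have "0 \<le> N S"
      by (simp add: N_def)
    ultimately show ?thesis
      by (cases "N S") auto
  qed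
  \<comment> \<open>the lower bound k makes the negative parts finite, so the difference is additive\<close>
  obtain nA nB where N: "N A = ereal nA" "N B = ereal nB"
    using N_real[OF assms(1)] N_real[OF assms(3)] by blast
  have "P A \<noteq> - \<infinity>" "P B \<noteq> - \<infinity>"
    by (simp_all add: P_def)
  then show ?thesis
    unfolding search_cost_def P_def[symmetric] N_def[symmetric] P_Un N_Un N
    by (cases "P A"; cases "P B") simp_all
qed

lemma search_cost_eq_set_integral:
  fixes c :: "real \<Rightarrow> real"
  assumes "set_integrable lebesgue S c"
  shows "search_cost c S = ereal (LINT x:S|lebesgue. c x)"
proof -
  have int: "integrable lebesgue (\<lambda>x. indicator S x * c x)"
    using assms by (simp add: set_integrable_def)
  have eq: "indicator S x * ennreal (c x) = ennreal (indicator S x * c x)"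
    "indicator S x * ennreal (- c x) = ennreal (- (indicator S x * c x))" for x
    by (simp_all split: split_indicator)
  have finite: "(\<integral>\<^sup>+ x. ennreal (indicator S x * c x) \<partial>lebesgue) \<noteq> \<infinity>"
    "(\<integral>\<^sup>+ x. ennreal (- (indicator S x * c x)) \<partial>lebesgue) \<noteq> \<infinity>"
    using int unfolding real_integrable_def by auto
  have real: "enn2ereal r = ereal (enn2real r)" if "r \<noteq> \<infinity>" for r :: ennreal
    using that by (cases r) simp_all
  show ?thesis
    unfolding search_cost_def eq set_lebesgue_integral_def real_scaleR_def
      real_lebesgue_integral_def[OF int] real[OF finite(1)] real[OF finite(2)]
    by simp
qed

lemma search_cost_bounds:
  fixes c :: "real \<Rightarrow> real"
  assumes "S \<in> lmeasurable" "set_borel_measurable lebesgue S c"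
    and "\<And>x. x \<in> S \<Longrightarrow> lo \<le> c x" "\<And>x. x \<in> S \<Longrightarrow> c x \<le> hi"
  shows "ereal (lo * measure lebesgue S) \<le> search_cost c S"
    and "search_cost c S \<le> ereal (hi * measure lebesgue S)"
proof -
  have bound: "norm (indicator S x *\<^sub>R c x) \<le> max \<bar>lo\<bar> \<bar>hi\<bar>" if "x \<in> S" for x
    using assms(3,4)[OF that] that by (auto simp: abs_le_iff le_max_iff_disj)
  have int: "set_integrable lebesgue S c"
    unfolding set_integrable_def
    using assms(1,2) bound
    by (intro integrableI_bounded_set[where A = S and B = "max \<bar>lo\<bar> \<bar>hi\<bar>"])
       (auto simp: set_borel_measurable_def fmeasurable_def)
  have const: "set_integrable lebesgue S (\<lambda>_. r)" "(LINT x:S|lebesgue. r) = r * measure lebesgue S" for r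
    using assms(1) by (auto simp: set_integrable_def set_integral_const fmeasurable_def)
  show "ereal (lo * measure lebesgue S) \<le> search_cost c S"
    using set_integral_mono[OF const(1) int assms(3)] const(2)
    by (simp add: search_cost_eq_set_integral[OF int])
  show "search_cost c S \<le> ereal (hi * measure lebesgue S)"
    using set_integral_mono[OF int const(1) assms(4)] const(2)
    by (simp add: search_cost_eq_set_integral[OF int])
qed

section \<open>Translating a block of projects\<close>

definition move_block :: "real \<Rightarrow> real \<Rightarrow> real \<Rightarrow> real set \<Rightarrow> real set" where
  "move_block a b m Y = (Y - {a..a+m}) \<union> (+) (b - a) ` (Y \<inter> {a..a+m})"

lemma translated_block_subset:
  fixes a b m :: real
  shows "(+) (b - a) ` (Y \<inter> {a..a+m}) \<subseteq> {b..b+m}"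
proof (rule image_subsetI)
  fix x
  assume "x \<in> Y \<inter> {a..a+m}"
  then have "a \<le> x" "x \<le> a + m"
    by auto
  then show "b - a + x \<in> {b..b+m}"
    unfolding atLeastAtMost_iff by (intro conjI) linarith+
qed

lemma move_block_UN: "move_block a b m (\<Union>i\<in>I. Y i) = (\<Union>i\<in>I. move_block a b m (Y i))"
  unfolding move_block_def by blast

lemma move_block_Diff:
  fixes a b m :: real
  assumes "Y \<inter> {b..b+m} = {}" "Z \<inter> {b..b+m} = {}"
  shows "move_block a b m (Y - Z) = move_block a b m Y - move_block a b m Z"
proof -
  have "(+) (b - a) ` ((Y - Z) \<inter> {a..a+m})
          = (+) (b - a) ` (Y \<inter> {a..a+m}) - (+) (b - a) ` (Z \<inter> {a..a+m})"
    by (simp add: Diff_Int_distrib2 image_set_diff)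
  then show ?thesis
    using assms translated_block_subset[of b a Y m] translated_block_subset[of b a Z m]
    unfolding move_block_def by auto
qed

lemma move_block_subset:
  assumes "Y \<subseteq> U" "{b..b+m} \<subseteq> U"
  shows "move_block a b m Y \<subseteq> U"
  using assms translated_block_subset[of b a Y m] unfolding move_block_def by blast

lemma sets_move_block:
  assumes "Y \<in> sets lebesgue"
  shows "move_block a b m Y \<in> sets lebesgue"
proof -
  have "Y \<inter> {a..a+m} \<in> lmeasurable"
    using assms by (intro bounded_set_imp_lmeasurable bounded_Int) auto
  then have "(+) (b - a) ` (Y \<inter> {a..a+m}) \<in> lmeasurable"
    by (rule measurable_translation)
  then show ?thesis
    using assms unfolding move_block_def by (intro sets.Un sets.Diff) (auto intro: fmeasurableD)
qed

lemma measure_move_block: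
  assumes "Y \<in> lmeasurable" "Y \<inter> {b..b+m} = {}"
  shows "measure lebesgue (move_block a b m Y) = measure lebesgue Y"
proof -
  have parts: "Y - {a..a+m} \<in> lmeasurable" "Y \<inter> {a..a+m} \<in> lmeasurable"
    using assms(1) by auto
  have "measure lebesgue (move_block a b m Y)
          = measure lebesgue (Y - {a..a+m}) + measure lebesgue ((+) (b - a) ` (Y \<inter> {a..a+m}))"
  proof -
    have "(Y - {a..a+m}) \<inter> (+) (b - a) ` (Y \<inter> {a..a+m}) = {}"
      using assms(2) translated_block_subset[of b a Y m] by blast
    then show ?thesis
      unfolding move_block_def
      using measure_Un3[OF parts(1) measurable_translation[OF parts(2)], of "b - a"] by simp
  qed
  also have "\<dots> = measure lebesgue (Y - {a..a+m}) + measure lebesgue (Y \<inter> {a..a+m})"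
    by (simp add: measure_translation)
  also have "\<dots> = measure lebesgue Y"
  proof -
    have "(Y - {a..a+m}) \<union> (Y \<inter> {a..a+m}) = Y" "(Y - {a..a+m}) \<inter> (Y \<inter> {a..a+m}) = {}"
      by auto
    then show ?thesis
      using measure_Un3[OF parts] by simp
  qed
  finally show ?thesis .
qed

lemma lmeasurable_if_subset_unit_interval:
  fixes S :: "real set"
  assumes "S \<in> sets lebesgue" "S \<subseteq> {0..<1}"
  shows "S \<in> lmeasurable"
  using assms by (intro bounded_set_imp_lmeasurable bounded_subset[OF bounded_Ico])

lemma measure_le_1_if_subset_unit_interval:
  fixes S :: "real set"
  assumes "S \<in> sets lebesgue" "S \<subseteq> {0..<1}"
  shows "measure lebesgue S \<le> 1"
  using measure_mono_fmeasurable[OF assms(2,1) bounded_set_imp_lmeasurable[OF bounded_Ico]] by simp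

lemma mono_on_unit_interval_ge_0:
  fixes c :: "real \<Rightarrow> real"
  assumes "mono_on {0..<1} c" "x \<in> {0..<1}"
  shows "c 0 \<le> c x"
  using assms by (auto intro: mono_onD)

lemma search_cost_move_block:
  fixes c :: "real \<Rightarrow> real"
  assumes cont: "continuous_on {0..<1} c" and mono: "mono_on {0..<1} c"
    and blocks: "0 \<le> a" "0 \<le> b" "a + m < 1" "b + m < 1"
    and Y: "Y \<in> sets lebesgue" "Y \<subseteq> {0..<1}" "Y \<inter> {b..b+m} = {}"
  shows "search_cost c (move_block a b m Y) + ereal ((c a - c (b + m)) * measure lebesgue (Y \<inter> {a..a+m}))
           \<le> search_cost c Y"
proof -
  define R where "R = Y - {a..a+m}"
  define Z where "Z = Y \<inter> {a..a+m}"
  define Z' where "Z' = (+) (b - a) ` Z"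
  define \<mu> where "\<mu> = measure lebesgue Z"
  have unit: "S \<in> lmeasurable" "set_borel_measurable lebesgue S c"
    if "S \<in> sets lebesgue" "S \<subseteq> {0..<1}" for S
    by (fact lmeasurable_if_subset_unit_interval[OF that],
        fact continuous_on_set_borel_measurable_lebesgue[OF cont that])
  have Z'_block: "Z' \<subseteq> {b..b+m}"
    unfolding Z'_def Z_def by (rule translated_block_subset)
  have R: "R \<in> sets lebesgue" "R \<subseteq> {0..<1}" and Z: "Z \<in> sets lebesgue" "Z \<subseteq> {0..<1}"
    using Y blocks by (auto simp: R_def Z_def)
  have Z'_lmeasurable: "Z' \<in> lmeasurable"
    unfolding Z'_def using unit(1)[OF Z] by (rule measurable_translation)
  have Z': "Z' \<in> sets lebesgue" "Z' \<subseteq> {0..<1}"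
    using Z'_lmeasurable Z'_block blocks by (auto intro: fmeasurableD)
  have \<mu>_Z': "measure lebesgue Z' = \<mu>"
    by (simp add: Z'_def \<mu>_def measure_translation)
  have Y_split: "Y = R \<union> Z" "R \<inter> Z = {}" "\<And>x. x \<in> R \<union> Z \<Longrightarrow> c 0 \<le> c x"
    using R(2) Z(2) mono_on_unit_interval_ge_0[OF mono] by (auto simp: R_def Z_def)
  have moved_split:
    "move_block a b m Y = R \<union> Z'" "R \<inter> Z' = {}" "\<And>x. x \<in> R \<union> Z' \<Longrightarrow> c 0 \<le> c x"
    using R(2) Z'(2) Z'_block Y(3) mono_on_unit_interval_ge_0[OF mono]
    by (auto simp: move_block_def R_def Z'_def Z_def)
  have cost_Y: "search_cost c Y = search_cost c R + search_cost c Z"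
    unfolding Y_split(1) using unit[OF R] unit[OF Z] Y_split(2,3) by (rule search_cost_Un)
  have cost_moved: "search_cost c (move_block a b m Y) = search_cost c R + search_cost c Z'"
    unfolding moved_split(1) using unit[OF R] unit[OF Z'] moved_split(2,3) by (rule search_cost_Un)
  have "search_cost c Z' + ereal ((c a - c (b + m)) * \<mu>)
          \<le> ereal (c (b + m) * \<mu>) + ereal ((c a - c (b + m)) * \<mu>)"
    using Z' Z'_block blocks
    by (intro add_right_mono search_cost_bounds(2)[OF unit[OF Z'], of "c b", unfolded \<mu>_Z'])
      (auto intro!: mono_onD[OF mono])
  also have "\<dots> = ereal (c a * \<mu>)"
    by (simp add: algebra_simps)
  also have "\<dots> \<le> search_cost c Z"
    using Z blocks by (intro search_cost_bounds(1)[OF unit[OF Z], of _ "c (a + m)", folded \<mu>_def])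
      (auto simp: Z_def intro!: mono_onD[OF mono])
  finally show ?thesis
    unfolding cost_Y cost_moved Z_def[symmetric] \<mu>_def[symmetric]
    by (metis add.assoc add_left_mono)
qed

section \<open>Payoffs\<close>

lemma strategy_searched_before:
  assumes "strategy Ls"
  shows "searched_before Ls t \<in> sets lebesgue" "searched_before Ls t \<subseteq> {0..<1}"
  using assms unfolding searched_before_def strategy_def by auto

lemma searched_before_move_block:
  "searched_before (\<lambda>s. move_block a b m (Ls s)) t = move_block a b m (searched_before Ls t)"
  unfolding searched_before_def move_block_UN ..

lemma strategy_move_block:
  assumes "strategy Ls" "0 \<le> b" "b + m < 1"
  shows "strategy (\<lambda>s. move_block a b m (Ls s))"
proof -
  have "{b..b+m} \<subseteq> {0..<1}"
    using assms(2,3) by auto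
  then show ?thesis
    using assms(1) sets_move_block move_block_subset[of _ "{0..<1}" b m a]
    unfolding strategy_def by auto
qed

lemma survival_weight_pos:
  assumes "strategy Ls" "0 \<le> p" "p < 1" "0 < \<delta>"
  shows "0 < \<delta> ^ t * (1 - p * measure lebesgue (searched_before Ls t))"
proof -
  have "p * measure lebesgue (searched_before Ls t) \<le> p"
    using measure_le_1_if_subset_unit_interval[OF strategy_searched_before[OF assms(1)]] assms(2)
    by (simp add: mult_left_le)
  then show ?thesis
    using assms(3,4) by simp
qed

lemma ereal_minus_scaled_mono:
  fixes C C' :: ereal
  assumes "C' + ereal e \<le> C" "0 \<le> w"
  shows "ereal g - ereal w * C + ereal (w * e) \<le> ereal g - ereal w * C'"
proof -
  have "r' * w + e * w \<le> r * w" if "r' + e \<le> r" for r r'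
    using mult_right_mono[OF that assms(2)] by (simp add: distrib_right)
  then show ?thesis
    using assms by (cases C; cases C'; cases "w = 0") (auto simp: algebra_simps)
qed

lemma ereal_minus_scaled_le:
  fixes C :: ereal
  assumes "ereal k \<le> C" "k \<le> 0" "0 \<le> w" "w \<le> W" "g \<le> G"
  shows "ereal g - ereal w * C \<le> ereal (G - W * k)"
proof (cases C)
  case (real r)
  have "W * k \<le> w * k"
    by (rule mult_right_mono_neg[OF assms(4,2)])
  also have "\<dots> \<le> w * r"
    using assms(1,3) real by (simp add: mult_left_mono)
  finally show ?thesis
    using real assms(5) by simp
next
  case PInf
  have "0 \<le> - (W * k)"
    using assms(2,3,4) by (simp add: mult_nonneg_nonpos)
  then show ?thesis
    using PInf assms(3,5) by (cases "w = 0") auto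
next
  case MInf
  then show ?thesis
    using assms(1) by simp
qed

lemma period_payoff_move_block:
  fixes c :: "real \<Rightarrow> real"
  assumes cont: "continuous_on {0..<1} c" and mono: "mono_on {0..<1} c"
    and "0 \<le> p" "p \<le> 1" "0 \<le> \<delta>" and Ls: "strategy Ls"
    and blocks: "0 \<le> a" "0 \<le> b" "a + m < 1" "b + m < 1"
    and unsearched: "\<And>s. Ls s \<inter> {b..b+m} = {}"
  shows "period_payoff c p v \<delta> Ls t
           + ereal (\<delta> ^ t * (1 - p * measure lebesgue (searched_before Ls t))
                    * ((c a - c (b + m)) * measure lebesgue (Ls t \<inter> {a..a+m})))
         \<le> period_payoff c p v \<delta> (\<lambda>s. move_block a b m (Ls s)) t"
proof -
  define S where "S = searched_before Ls t"
  have S: "S \<in> sets lebesgue" "S \<subseteq> {0..<1}"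
    using strategy_searched_before[OF Ls] by (auto simp: S_def)
  have S_unsearched: "S \<inter> {b..b+m} = {}"
    using unsearched by (auto simp: S_def searched_before_def)
  have Lt: "Ls t \<in> sets lebesgue" "Ls t \<subseteq> {0..<1}"
    using Ls by (auto simp: strategy_def)
  have measure_S: "measure lebesgue (searched_before (\<lambda>s. move_block a b m (Ls s)) t) = measure lebesgue S"
    unfolding searched_before_move_block S_def[symmetric]
    using S S_unsearched by (intro measure_move_block lmeasurable_if_subset_unit_interval)
  have measure_new: "measure lebesgue (move_block a b m (Ls t) - searched_before (\<lambda>s. move_block a b m (Ls s)) t)
                   = measure lebesgue (Ls t - S)"
    unfolding searched_before_move_block S_def[symmetric]
    unfolding move_block_Diff[OF unsearched S_unsearched, symmetric]
    using S Lt unsearched by (intro measure_move_block lmeasurable_if_subset_unit_interval) auto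
  have weight: "0 \<le> \<delta> ^ t * (1 - p * measure lebesgue S)"
    using measure_le_1_if_subset_unit_interval[OF S] assms(3,4,5) by (simp add: mult_le_one)
  show ?thesis
    unfolding period_payoff_def S_def[symmetric] measure_S measure_new
    by (rule ereal_minus_scaled_mono[OF search_cost_move_block[OF cont mono blocks Lt unsearched] weight])
qed

lemma period_payoff_le:
  fixes c :: "real \<Rightarrow> real"
  assumes X: "strategy X" and mono: "mono_on {0..<1} c"
    and "0 \<le> p" "p \<le> 1" "0 \<le> v" "0 \<le> \<delta>"
  shows "period_payoff c p v \<delta> X t \<le> ereal (\<delta> ^ t * (v * p - min 0 (c 0)))"
proof -
  define S where "S = searched_before X t"
  have S: "S \<in> sets lebesgue" "S \<subseteq> {0..<1}"
    using strategy_searched_before[OF X] by (auto simp: S_def)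
  have Xt: "X t \<in> sets lebesgue" "X t \<subseteq> {0..<1}"
    using X by (auto simp: strategy_def)
  have measure_S: "0 \<le> measure lebesgue S" "measure lebesgue S \<le> 1"
    using measure_le_1_if_subset_unit_interval[OF S] by auto
  have measure_new: "measure lebesgue (X t - S) \<le> 1"
    using Xt S by (intro measure_le_1_if_subset_unit_interval) auto
  have "min 0 (c 0) \<le> min 0 (c 0) * measure lebesgue (X t)"
    using mult_left_mono_neg[OF measure_le_1_if_subset_unit_interval[OF Xt], of "min 0 (c 0)"] by simp
  also have "ereal \<dots> \<le> search_cost c (X t)"
    using Xt mono_on_unit_interval_ge_0[OF mono]
    by (intro search_cost_lower_bound lmeasurable_if_subset_unit_interval) auto
  finally have cost: "ereal (min 0 (c 0)) \<le> search_cost c (X t)"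
    by simp
  have weight: "0 \<le> \<delta> ^ t * (1 - p * measure lebesgue S)"
    "\<delta> ^ t * (1 - p * measure lebesgue S) \<le> \<delta> ^ t"
    using measure_S assms(3,4,6) by (simp_all add: mult_le_one mult_left_le)
  have reward: "\<delta> ^ t * v * p * measure lebesgue (X t - S) \<le> \<delta> ^ t * v * p"
    using measure_new assms(3,5,6) by (simp add: mult_left_le)
  have "period_payoff c p v \<delta> X t \<le> ereal (\<delta> ^ t * v * p - \<delta> ^ t * min 0 (c 0))"
    unfolding period_payoff_def S_def[symmetric]
    using cost weight reward by (intro ereal_minus_scaled_le) auto
  then show ?thesis
    by (simp add: algebra_simps)
qed

lemma suminf_pos_period_payoff_finite:
  fixes c :: "real \<Rightarrow> real"
  assumes "strategy X" "mono_on {0..<1} c" "0 \<le> p" "p \<le> 1" "0 \<le> v" "0 \<le> \<delta>" "\<delta> < 1"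
  shows "(\<Sum>t. max 0 (period_payoff c p v \<delta> X t)) < \<infinity>"
proof -
  define M where "M = v * p - min 0 (c 0)"
  have "0 \<le> v * p" "min 0 (c 0) \<le> 0"
    using assms(3,5) by simp_all
  then have "0 \<le> M"
    unfolding M_def by linarith
  then have "max 0 (period_payoff c p v \<delta> X t) \<le> ereal (\<delta> ^ t * M)" for t
    using period_payoff_le[OF assms(1-6)] assms(6) by (auto simp: M_def)
  then have "(\<Sum>t. max 0 (period_payoff c p v \<delta> X t)) \<le> (\<Sum>t. ereal (\<delta> ^ t * M))"
    by (intro suminf_le_pos) auto
  also have "\<dots> = ereal (\<Sum>t. \<delta> ^ t * M)"
    using assms(6,7) by (intro suminf_ereal' summable_mult2 summable_geometric) auto
  finally show ?thesis
    by (auto simp: less_le_trans)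
qed

lemma strategy_no_search: "strategy (\<lambda>_. {})"
  by (simp add: strategy_def)

lemma payoff_no_search: "payoff c p v \<delta> (\<lambda>_. {}) = 0"
  by (simp add: payoff_def period_payoff_def searched_before_def search_cost_def)

lemma suminf_pos_minus_neg_less:
  fixes f g :: "nat \<Rightarrow> ereal" and gain :: "nat \<Rightarrow> real"
  assumes gains: "\<And>s. f s + ereal (gain s) \<le> g s" "\<And>s. 0 \<le> gain s" "0 < gain t"
    and finite: "(\<Sum>s. max 0 (f s)) < \<infinity>" "(\<Sum>s. max 0 (- f s)) < \<infinity>"
      "(\<Sum>s. max 0 (g s)) < \<infinity>"
  shows "(\<Sum>s. max 0 (f s)) - (\<Sum>s. max 0 (- f s)) < (\<Sum>s. max 0 (g s)) - (\<Sum>s. max 0 (- g s))"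
proof -
  define Pf where "Pf = (\<Sum>s. max 0 (f s))"
  define Nf where "Nf = (\<Sum>s. max 0 (- f s))"
  define Pg where "Pg = (\<Sum>s. max 0 (g s))"
  define Ng where "Ng = (\<Sum>s. max 0 (- g s))"
  define G where "G = (\<Sum>s. ereal (gain s))"
  \<comment> \<open>negative parts are moved across so that no infinite sum is ever subtracted\<close>
  have termwise: "max 0 (f s) + max 0 (- g s) + ereal (gain s) \<le> max 0 (g s) + max 0 (- f s)" for s
    using gains(1)[of s] gains(2)[of s] by (cases "f s"; cases "g s") (auto simp: max_def split: if_splits)
  have "Pf + Ng + G = (\<Sum>s. max 0 (f s) + max 0 (- g s) + ereal (gain s))"
    unfolding Pf_def Ng_def G_def using gains(2) by (simp add: suminf_add_ereal)
  also have "\<dots> \<le> (\<Sum>s. max 0 (g s) + max 0 (- f s))"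
    using termwise gains(2) by (intro suminf_le_pos) auto
  also have "\<dots> = Pg + Nf"
    unfolding Pg_def Nf_def by (simp add: suminf_add_ereal)
  finally have swapped: "Pf + Ng + G \<le> Pg + Nf" .
  have "ereal (gain t) \<le> (\<Sum>s<Suc t. ereal (gain s))"
    using member_le_sum[of t "{..<Suc t}" "\<lambda>s. ereal (gain s)"] gains(2) by (auto intro!: sum_nonneg)
  also have "\<dots> \<le> G"
    unfolding G_def using gains(2) by (intro suminf_upper) auto
  finally have "0 < G"
    using gains(3) less_le_trans[of 0 "ereal (gain t)" G] by simp
  have "0 \<le> Pf" "0 \<le> Ng" "0 \<le> Pg" "0 \<le> Nf"
    by (simp_all add: Pf_def Ng_def Pg_def Nf_def suminf_0_le)
  moreover have "\<exists>r. x = ereal r" if "0 \<le> x" "x < \<infinity>" for x :: ereal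
    using that by (cases x) auto
  ultimately obtain pf nf pg where "Pf = ereal pf" "Nf = ereal nf" "Pg = ereal pg"
    using finite unfolding Pf_def[symmetric] Nf_def[symmetric] Pg_def[symmetric] by meson
  then show ?thesis
    using swapped \<open>0 < G\<close> \<open>0 \<le> Ng\<close>
    unfolding Pf_def[symmetric] Nf_def[symmetric] Pg_def[symmetric] Ng_def[symmetric]
    by (cases Ng; cases G) auto
qed

lemma payoff_less_if_period_gains:
  fixes c :: "real \<Rightarrow> real" and gain :: "nat \<Rightarrow> real"
  assumes "strategy X" "strategy Y" "mono_on {0..<1} c"
    and "0 \<le> p" "p \<le> 1" "0 \<le> v" "0 \<le> \<delta>" "\<delta> < 1"
    and "0 \<le> payoff c p v \<delta> X"
    and "\<And>s. period_payoff c p v \<delta> X s + ereal (gain s) \<le> period_payoff c p v \<delta> Y s"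
    and "\<And>s. 0 \<le> gain s" "0 < gain t"
  shows "payoff c p v \<delta> X < payoff c p v \<delta> Y"
proof -
  have pos_X: "(\<Sum>s. max 0 (period_payoff c p v \<delta> X s)) < \<infinity>"
    and pos_Y: "(\<Sum>s. max 0 (period_payoff c p v \<delta> Y s)) < \<infinity>"
    using suminf_pos_period_payoff_finite assms(1-8) by blast+
  have neg_X: "(\<Sum>s. max 0 (- period_payoff c p v \<delta> X s)) < \<infinity>"
    using assms(9) pos_X unfolding payoff_def
    by (cases "\<Sum>s. max 0 (period_payoff c p v \<delta> X s)";
        cases "\<Sum>s. max 0 (- period_payoff c p v \<delta> X s)") auto
  show ?thesis
    unfolding payoff_def using assms(10-12) pos_X neg_X pos_Y by (rule suminf_pos_minus_neg_less)
qed

lemma is_interval_obtain_segment: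
  fixes L :: "real set"
  assumes "is_interval L" "0 < measure lebesgue L"
  obtains x y where "x < y" "{x..y} \<subseteq> L"
proof -
  have "\<exists>x\<in>L. \<exists>y\<in>L. x < y"
  proof (rule ccontr)
    assume "\<not> (\<exists>x\<in>L. \<exists>y\<in>L. x < y)"
    then have "L = {} \<or> (\<exists>x. L = {x})"
      by (metis linorder_neqE_linordered_idom subsetI singleton_iff subset_singleton_iff)
    then show False
      using assms(2) by auto
  qed
  then show ?thesis
    using assms(1) that unfolding is_interval_1 by (meson atLeastAtMost_iff subsetI)
qed

lemma separated_intervals_obtain_blocks:
  fixes L L'' :: "real set"
  assumes "is_interval L" "is_interval L''" "L \<subseteq> {0..<1}" "L'' \<subseteq> {0..<1}"
    and "0 < measure lebesgue L" "0 < measure lebesgue L''" "Sup L'' < Inf L"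
  obtains a b m where "0 < m" "0 \<le> b" "b + m < a" "a + m < 1" "{a..a+m} \<subseteq> L" "{b..b+m} \<subseteq> L''"
proof -
  obtain x y where xy: "x < y" "{x..y} \<subseteq> L"
    using is_interval_obtain_segment[OF assms(1,5)] .
  obtain x'' y'' where xy'': "x'' < y''" "{x''..y''} \<subseteq> L''"
    using is_interval_obtain_segment[OF assms(2,6)] .
  define m where "m = min (y - x) (y'' - x'')"
  have "bdd_above L''" "bdd_below L"
    using bdd_above_mono[OF _ assms(4)] bdd_below_mono[OF _ assms(3)] by auto
  then have "y'' \<le> Sup L''" "Inf L \<le> x"
    using xy xy'' by (auto intro!: cSup_upper cInf_lower)
  then have "x'' + m < x"
    using assms(7) by (simp add: m_def)
  moreover have "0 \<le> x''" "x + m < 1"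
    using xy xy'' assms(3,4) by (auto simp: m_def subset_iff)
  moreover have "x + m \<le> y" "x'' + m \<le> y''"
    by (simp_all add: m_def)
  then have "{x..x+m} \<subseteq> {x..y}" "{x''..x''+m} \<subseteq> {x''..y''}"
    by auto
  then have "{x..x+m} \<subseteq> L" "{x''..x''+m} \<subseteq> L''"
    using xy(2) xy''(2) by blast+
  ultimately show ?thesis
    using xy xy'' that[of m x'' x] by (simp add: m_def)
qed

lemma payoff_move_block_less:
  fixes c :: "real \<Rightarrow> real"
  assumes cont: "continuous_on {0..<1} c" and strict: "strict_mono_on {0..<1} c"
    and "0 \<le> p" "p < 1" "0 \<le> v" "0 < \<delta>" "\<delta> < 1"
    and Ls: "strategy Ls" "0 \<le> payoff c p v \<delta> Ls"
    and blocks: "0 < m" "0 \<le> b" "b + m < a" "a + m < 1"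
    and searched: "{a..a+m} \<subseteq> Ls t" and unsearched: "\<And>s. Ls s \<inter> {b..b+m} = {}"
  shows "payoff c p v \<delta> Ls < payoff c p v \<delta> (\<lambda>s. move_block a b m (Ls s))"
proof -
  have mono: "mono_on {0..<1} c"
    using strict by (rule strict_mono_on_imp_mono_on)
  define gain where "gain s = \<delta> ^ s * (1 - p * measure lebesgue (searched_before Ls s))
                                 * ((c a - c (b + m)) * measure lebesgue (Ls s \<inter> {a..a+m}))" for s
  have weight: "0 < \<delta> ^ s * (1 - p * measure lebesgue (searched_before Ls s))" for s
    using survival_weight_pos[OF Ls(1) assms(3,4,6)] .
  have "c (b + m) < c a"
    using blocks by (intro strict_mono_onD[OF strict]) auto
  then have "0 \<le> gain s" for s
    unfolding gain_def
    by (intro mult_nonneg_nonneg[OF less_imp_le[OF weight]] mult_nonneg_nonneg) auto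
  moreover have "measure lebesgue (Ls t \<inter> {a..a+m}) = m"
    using searched blocks(1) by (simp add: Int_absorb1)
  then have "0 < gain t"
    unfolding gain_def
    using \<open>c (b + m) < c a\<close> blocks(1) by (intro mult_pos_pos[OF weight] mult_pos_pos) auto
  moreover have "period_payoff c p v \<delta> Ls s + ereal (gain s)
                   \<le> period_payoff c p v \<delta> (\<lambda>s. move_block a b m (Ls s)) s" for s
    unfolding gain_def using blocks unsearched assms(3,4,6)
    by (intro period_payoff_move_block[OF cont mono _ _ _ Ls(1)]) auto
  moreover have "strategy (\<lambda>s. move_block a b m (Ls s))"
    using Ls(1) blocks by (intro strategy_move_block) auto
  ultimately show ?thesis
    using Ls mono assms(3-7) by (intro payoff_less_if_period_gains) auto
qed

theorem lemma2:
  fixes c :: "real \<Rightarrow> real" and p v \<delta> :: real and Ls :: "nat \<Rightarrow> real set"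
  assumes "continuous_on {0..<1} c"
    and "strict_mono_on {0..<1} c"
    and "filterlim c at_top (at_left 1)"
    and "0 < p" and "p < 1" and "0 < v" and "0 < \<delta>" and "\<delta> < 1"
    and "optimal_strategy c p v \<delta> Ls"
  shows "\<not> (\<exists>L L''. is_interval L \<and> is_interval L'' \<and>
            L \<subseteq> {0..<1} \<and> L'' \<subseteq> {0..<1} \<and>
            measure lebesgue L > 0 \<and> measure lebesgue L'' > 0 \<and>
            Inf L > Sup L'' \<and>
            (\<exists>t. L \<subseteq> Ls t) \<and> (\<forall>t. L'' \<inter> Ls t = {}))"
proof
  assume "\<exists>L L''. is_interval L \<and> is_interval L'' \<and>
            L \<subseteq> {0..<1} \<and> L'' \<subseteq> {0..<1} \<and>
            measure lebesgue L > 0 \<and> measure lebesgue L'' > 0 \<and>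
            Inf L > Sup L'' \<and>
            (\<exists>t. L \<subseteq> Ls t) \<and> (\<forall>t. L'' \<inter> Ls t = {})"
  then obtain L L'' t
    where intervals: "is_interval L" "is_interval L''" "L \<subseteq> {0..<1}" "L'' \<subseteq> {0..<1}"
      "0 < measure lebesgue L" "0 < measure lebesgue L''" "Sup L'' < Inf L"
    and searched: "L \<subseteq> Ls t" and unsearched: "\<And>s. L'' \<inter> Ls s = {}"
    by blast
  obtain a b m where blocks: "0 < m" "0 \<le> b" "b + m < a" "a + m < 1"
    and "{a..a+m} \<subseteq> L" "{b..b+m} \<subseteq> L''"
    by (rule separated_intervals_obtain_blocks[OF intervals])
  with searched unsearched have "{a..a+m} \<subseteq> Ls t" "\<And>s. Ls s \<inter> {b..b+m} = {}"
    by blast+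
  moreover have Ls: "strategy Ls"
    and optimal: "\<And>X. strategy X \<Longrightarrow> payoff c p v \<delta> X \<le> payoff c p v \<delta> Ls"
    using assms(9) by (auto simp: optimal_strategy_def)
  moreover have "0 \<le> payoff c p v \<delta> Ls"
    using optimal[OF strategy_no_search] by (simp add: payoff_no_search)
  ultimately have "payoff c p v \<delta> Ls < payoff c p v \<delta> (\<lambda>s. move_block a b m (Ls s))"
    using assms(1,2,4-8) blocks by (intro payoff_move_block_less) auto
  moreover have "strategy (\<lambda>s. move_block a b m (Ls s))"
    using Ls blocks by (intro strategy_move_block) auto
  ultimately show False
    using optimal by fastforce
qed

end
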